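(* Let $f:\mathbb{R}^N\to\mathbb{R}_{++}\cup\{\infty\}$ be a standard interference function and let $f_\infty:\mathbb{R}^N\to\mathbb{R}\cup\{\infty\}$ be its asymptotic function. Then: (i) For every $\mathbf{x}\in\mathbb{R}_+^N$, $f_\infty(\mathbf{x})=\lim_{h\to\infty}f(h\mathbf{x})/h\in\mathbb{R}_+$. (ii) $f_\infty$ is lower semicontinuous and positively homogeneous. If, in addition, $f$ is continuous when restricted to $\mathbb{R}_+^N$, then $f_\infty$ is continuous when restricted to $\mathbb{R}_+^N$. (iii) For all $\mathbf{x}_1,\mathbf{x}_2\in\mathbb{R}_+^N$, $\mathbf{x}_1\ge\mathbf{x}_2$ implies $f_\infty(\mathbf{x}_2)\le f_\infty(\mathbf{x}_1)$. (iv) If $f$ is continuous when restricted to $\mathbb{R}_+^N$, then for every $\mathbf{x}\in\mathbb{R}_+^N$ and all sequences $(\mathbf{x}_n)_{n\in\mathbb{N}}\subset\mathbb{R}_+^N$ and $(h_n)_{n\in\mathbb{N}}\subset\mathbb{R}_{++}$ with $\mathbf{x}_n\to\mathbf{x}$ and $h_n\to\infty$, we have $f_\infty(\mathbf{x})=\lim_{n\to\infty}f(h_n\mathbf{x}_n)/h_n$. (v) If $f$ is concave when restricted to $\mathbb{R}_+^N$, then $f_\infty$ is concave when restricted to $\mathbb{R}_+^N$.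
   Context: Vector inequalities are coordinatewise; $\mathbb{R}_+$, $\mathbb{R}_{++}$ denote nonnegative and positive reals. A function $f:\mathbb{R}^N\to\mathbb{R}_{++}\cup\{\infty\}$ is a standard interference function if: (1) for all $\mathbf{x}\in\mathbb{R}_+^N$ and all $\alpha>1$, $\alpha f(\mathbf{x})>f(\alpha\mathbf{x})$; (2) for all $\mathbf{x}_1,\mathbf{x}_2\in\mathbb{R}_+^N$, $\mathbf{x}_1\ge\mathbf{x}_2$ implies $f(\mathbf{x}_1)\ge f(\mathbf{x}_2)$; (3) $f(\mathbf{x})=\infty$ iff $\mathbf{x}\notin\mathbb{R}_+^N$. For a proper function $f:\mathbb{R}^N\to\mathbb{R}\cup\{\infty\}$ (i.e., finite somewhere), its asymptotic function is $f_\infty(\mathbf{x})=\inf\{\liminf_{n\to\infty} f(h_n\mathbf{x}_n)/h_n : (h_n)\subset\mathbb{R},\ h_n\to\infty,\ (\mathbf{x}_n)\subset\mathbb{R}^N,\ \mathbf{x}_n\to\mathbf{x}\}$, equivalently $f_\infty(\mathbf{x})=\liminf_{h\to\infty,\mathbf{y}\to\mathbf{x}} f(h\mathbf{y})/h$. Continuity (resp. concavity) "when restricted to $\mathbb{R}_+^N$" refers to the restriction of the function to $\mathbb{R}_+^N$. *)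

theory Defs
  imports "HOL-Analysis.Analysis" "HOL-Library.Extended_Real"
begin

definition nonneg_orthant :: "(real ^ 'n) set" where
  "nonneg_orthant = {x. \<forall>i. 0 \<le> x $ i}"

definition standard_interference :: "(real ^ 'n \<Rightarrow> ereal) \<Rightarrow> bool" where
  "standard_interference f \<longleftrightarrow>
     (\<forall>x. 0 < f x) \<and>
     (\<forall>x \<in> nonneg_orthant. \<forall>\<alpha>::real. \<alpha> > 1 \<longrightarrow> ereal \<alpha> * f x > f (\<alpha> *\<^sub>R x)) \<and>
     (\<forall>x1 \<in> nonneg_orthant. \<forall>x2 \<in> nonneg_orthant. x1 \<ge> x2 \<longrightarrow> f x1 \<ge> f x2) \<and>
     (\<forall>x. f x = \<infinity> \<longleftrightarrow> x \<notin> nonneg_orthant)"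

definition asymptotic_fun :: "(real ^ 'n \<Rightarrow> ereal) \<Rightarrow> real ^ 'n \<Rightarrow> ereal" where
  "asymptotic_fun f x =
     (INF p \<in> {(h, xs). filterlim h at_top sequentially \<and> xs \<longlonglongrightarrow> x}.
        liminf (\<lambda>n. f (fst p n *\<^sub>R snd p n) / ereal (fst p n)))"

definition lower_semicontinuous :: "('a::topological_space \<Rightarrow> ereal) \<Rightarrow> bool" where
  "lower_semicontinuous g \<longleftrightarrow> (\<forall>x c. c < g x \<longrightarrow> (\<forall>\<^sub>F y in nhds x. c < g y))"

definition positively_homogeneous :: "('a::real_vector \<Rightarrow> ereal) \<Rightarrow> bool" where
  "positively_homogeneous g \<longleftrightarrow> (\<forall>x. \<forall>\<alpha>::real. \<alpha> > 0 \<longrightarrow> g (\<alpha> *\<^sub>R x) = ereal \<alpha> * g x)"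

end

theory Submission
  imports Defs
begin

text \<open>
  On the orthant the ratio f(h x)/h is strictly decreasing in h (the scalability axiom), so it
  converges as h tends to infinity to its infimum, the slope of f in direction x; the slope
  inherits positive homogeneity, monotonicity and concavity from f. Extended by infinity off the
  orthant, the slope is lower semicontinuous along any filter: if xs tends to x, then xs
  eventually dominates t x for each t < 1, so the slope at xs is eventually at least t times the
  slope at x. Together with slope x \<le> f(h x)/h this identifies the asymptotic function with the
  extended slope. If f is continuous, fixing one large H with f(H x)/H close to the slope and
  using monotonicity in h gives the matching upper bounds.
\<close>

lemma closed_nonneg_orthant: "closed nonneg_orthant"
  unfolding nonneg_orthant_def by (rule closed_positive_orthant)

lemma convex_nonneg_orthant: "convex nonneg_orthant"
  unfolding convex_def nonneg_orthant_def by auto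

lemma scaleR_mem_nonneg_orthant: "x \<in> nonneg_orthant \<Longrightarrow> 0 \<le> c \<Longrightarrow> c *\<^sub>R x \<in> nonneg_orthant"
  by (simp add: nonneg_orthant_def)

lemma scaleR_mem_nonneg_orthant_iff:
  "0 < c \<Longrightarrow> c *\<^sub>R x \<in> nonneg_orthant \<longleftrightarrow> x \<in> nonneg_orthant"
  by (auto simp: nonneg_orthant_def zero_le_mult_iff)

lemma scaleR_le_scaleR_vec: "0 \<le> c \<Longrightarrow> (x :: real ^ 'n) \<le> y \<Longrightarrow> c *\<^sub>R x \<le> c *\<^sub>R y"
  by (simp add: less_eq_vec_def mult_left_mono)

lemma eventually_scaled_le:
  fixes xs :: "'a \<Rightarrow> real ^ 'n"
  assumes xs: "(xs \<longlongrightarrow> x) F" and x: "x \<in> nonneg_orthant" and t: "t < 1"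
  shows "eventually (\<lambda>n. xs n \<in> nonneg_orthant \<longrightarrow> t *\<^sub>R x \<le> xs n) F"
proof -
  have "eventually (\<lambda>n. 0 \<le> xs n $ i \<longrightarrow> t * x $ i \<le> xs n $ i) F" for i
  proof (cases "x $ i = 0")
    case False
    with x have "0 < x $ i"
      by (auto simp: nonneg_orthant_def order_le_less)
    with t have "t * x $ i < x $ i"
      by simp
    moreover have "((\<lambda>n. xs n $ i) \<longlongrightarrow> x $ i) F"
      using xs by (rule tendsto_vec_nth)
    ultimately have "eventually (\<lambda>n. t * x $ i < xs n $ i) F"
      by (rule order_tendstoD(1)[rotated])
    then show ?thesis
      by (rule eventually_mono) simp
  qed simp
  then have "eventually (\<lambda>n. \<forall>i. 0 \<le> xs n $ i \<longrightarrow> t * x $ i \<le> xs n $ i) F"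
    by (rule eventually_all_finite)
  then show ?thesis
    by (rule eventually_mono) (simp add: nonneg_orthant_def less_eq_vec_def)
qed

lemma ereal_less_times_factorE:
  fixes L :: real and c :: ereal
  assumes "c < ereal L"
  obtains t where "0 < t" "t < 1" "c < ereal (t * L)"
proof -
  have "((\<lambda>t. ereal (t * L)) \<longlongrightarrow> ereal (1 * L)) (at_left 1)"
    by (intro tendsto_intros)
  moreover have "c < ereal (1 * L)"
    using assms by simp
  ultimately have "eventually (\<lambda>t. c < ereal (t * L)) (at_left 1)"
    by (rule order_tendstoD(1))
  moreover have "eventually (\<lambda>t. t \<in> {0<..<1}) (at_left (1::real))"
    by (rule eventually_at_left_real) simp
  ultimately have "eventually (\<lambda>t. c < ereal (t * L) \<and> t \<in> {0<..<1}) (at_left (1::real))"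
    by (rule eventually_conj)
  then obtain t where "c < ereal (t * L)" "t \<in> {0<..<1}"
    using eventually_happens'[OF trivial_limit_at_left_real] by blast
  then show thesis
    using that by auto
qed

locale interference =
  fixes f :: "real ^ 'n \<Rightarrow> ereal"
  assumes standard: "standard_interference f"
begin

lemma f_outside: "x \<notin> nonneg_orthant \<Longrightarrow> f x = \<infinity>"
  using standard unfolding standard_interference_def by blast

lemma f_pos: "0 < f x"
  using standard unfolding standard_interference_def by blast

lemma f_finite: "x \<in> nonneg_orthant \<Longrightarrow> f x \<noteq> \<infinity>"
  using standard unfolding standard_interference_def by blast

lemma f_eq_ereal: "x \<in> nonneg_orthant \<Longrightarrow> f x = ereal (real_of_ereal (f x))"
  using f_pos[of x] f_finite[of x] by (cases "f x") auto

lemma real_f_pos: "x \<in> nonneg_orthant \<Longrightarrow> 0 < real_of_ereal (f x)"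
  using f_pos[of x] f_finite[of x] by (cases "f x") auto

lemma real_f_mono:
  assumes "x \<in> nonneg_orthant" "y \<in> nonneg_orthant" "x \<le> y"
  shows "real_of_ereal (f x) \<le> real_of_ereal (f y)"
proof -
  obtain r s where "f x = ereal r" "f y = ereal s"
    using f_eq_ereal assms by blast
  moreover have "f x \<le> f y"
    using standard assms unfolding standard_interference_def by blast
  ultimately show ?thesis
    by simp
qed

lemma real_f_scaleR_less:
  assumes x: "x \<in> nonneg_orthant" and a: "1 < a"
  shows "real_of_ereal (f (a *\<^sub>R x)) < a * real_of_ereal (f x)"
proof -
  have "f (a *\<^sub>R x) < ereal a * f x"
    using standard x a unfolding standard_interference_def by blast
  moreover obtain r s where "f x = ereal r" "f (a *\<^sub>R x) = ereal s"
    using f_eq_ereal x a scaleR_mem_nonneg_orthant[of x a] by fastforce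
  ultimately show ?thesis
    by simp
qed

definition ratio :: "real ^ 'n \<Rightarrow> real \<Rightarrow> real" where
  "ratio x h = real_of_ereal (f (h *\<^sub>R x)) / h"

lemma f_scaleR_divide_eq_ratio:
  assumes "x \<in> nonneg_orthant" "0 < h"
  shows "f (h *\<^sub>R x) / ereal h = ereal (ratio x h)"
proof -
  have "h *\<^sub>R x \<in> nonneg_orthant"
    using assms by (simp add: scaleR_mem_nonneg_orthant)
  then obtain r where "f (h *\<^sub>R x) = ereal r"
    using f_eq_ereal by blast
  then show ?thesis
    using assms(2) unfolding ratio_def by simp
qed

lemma ratio_pos: "x \<in> nonneg_orthant \<Longrightarrow> 0 < h \<Longrightarrow> 0 < ratio x h"
  unfolding ratio_def by (simp add: real_f_pos scaleR_mem_nonneg_orthant)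

lemma ratio_antimono:
  assumes x: "x \<in> nonneg_orthant" and h: "0 < h" "h \<le> h'"
  shows "ratio x h' \<le> ratio x h"
proof (cases "h = h'")
  case False
  with h have a: "1 < h' / h"
    by (simp add: field_simps)
  have "h *\<^sub>R x \<in> nonneg_orthant"
    using x h by (simp add: scaleR_mem_nonneg_orthant)
  from real_f_scaleR_less[OF this a]
  have "real_of_ereal (f (h' *\<^sub>R x)) < (h' / h) * real_of_ereal (f (h *\<^sub>R x))"
    using h by simp
  then show ?thesis
    using h unfolding ratio_def by (simp add: field_simps)
qed simp

lemma ratio_mono:
  assumes "x \<in> nonneg_orthant" "y \<in> nonneg_orthant" "x \<le> y" "0 < h"
  shows "ratio x h \<le> ratio y h"
  using assms real_f_mono[of "h *\<^sub>R x" "h *\<^sub>R y"] unfolding ratio_def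
  by (simp add: divide_right_mono scaleR_le_scaleR_vec scaleR_mem_nonneg_orthant)

lemma ratio_scaleR: "0 < a \<Longrightarrow> 0 < h \<Longrightarrow> ratio (a *\<^sub>R x) h = a * ratio x (a * h)"
  unfolding ratio_def by (simp add: mult.commute)

definition slope :: "real ^ 'n \<Rightarrow> real" where
  "slope x = Inf (ratio x ` {0<..})"

lemma bdd_below_ratio: "x \<in> nonneg_orthant \<Longrightarrow> bdd_below (ratio x ` {0<..})"
  by (rule bdd_belowI[where m = 0]) (auto intro: less_imp_le ratio_pos)

lemma slope_le_ratio: "x \<in> nonneg_orthant \<Longrightarrow> 0 < h \<Longrightarrow> slope x \<le> ratio x h"
  unfolding slope_def by (rule cInf_lower) (auto intro: bdd_below_ratio)

lemma slope_nonneg: "x \<in> nonneg_orthant \<Longrightarrow> 0 \<le> slope x"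
  unfolding slope_def by (rule cInf_greatest) (auto intro: less_imp_le ratio_pos)

lemma slope_less_ratioE:
  assumes "x \<in> nonneg_orthant" "slope x < r"
  obtains h where "0 < h" "ratio x h < r"
  using assms unfolding slope_def by (subst (asm) cInf_less_iff) (auto intro: bdd_below_ratio)

lemma tendsto_ratio_slope:
  assumes x: "x \<in> nonneg_orthant"
  shows "(ratio x \<longlongrightarrow> slope x) at_top"
proof (rule order_tendstoI)
  fix a
  assume a: "a < slope x"
  show "eventually (\<lambda>h. a < ratio x h) at_top"
    using eventually_gt_at_top[of 0]
    by eventually_elim (use a slope_le_ratio[OF x] in fastforce)
next
  fix a
  assume "slope x < a"
  then obtain h0 where h0: "0 < h0" "ratio x h0 < a"
    by (rule slope_less_ratioE[OF x])
  show "eventually (\<lambda>h. ratio x h < a) at_top"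
    using eventually_ge_at_top[of h0]
    by eventually_elim (use h0 ratio_antimono[OF x] in fastforce)
qed

lemma slope_scaleR:
  assumes x: "x \<in> nonneg_orthant" and a: "0 < a"
  shows "slope (a *\<^sub>R x) = a * slope x"
proof (rule tendsto_unique[OF trivial_limit_at_top_linorder])
  show "(ratio (a *\<^sub>R x) \<longlongrightarrow> slope (a *\<^sub>R x)) at_top"
    using x a by (simp add: tendsto_ratio_slope scaleR_mem_nonneg_orthant)
  have "filterlim (\<lambda>h. a * h) at_top at_top"
    using a by (intro filterlim_tendsto_pos_mult_at_top[OF tendsto_const] filterlim_ident)
  then have "((\<lambda>h. a * ratio x (a * h)) \<longlongrightarrow> a * slope x) at_top"
    by (intro tendsto_mult_left filterlim_compose[OF tendsto_ratio_slope[OF x]])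
  moreover have "eventually (\<lambda>h. a * ratio x (a * h) = ratio (a *\<^sub>R x) h) at_top"
    using eventually_gt_at_top[of 0] by eventually_elim (simp add: ratio_scaleR a)
  ultimately show "(ratio (a *\<^sub>R x) \<longlongrightarrow> a * slope x) at_top"
    by (rule Lim_transform_eventually)
qed

lemma slope_mono:
  assumes "x \<in> nonneg_orthant" "y \<in> nonneg_orthant" "x \<le> y"
  shows "slope x \<le> slope y"
proof (rule tendsto_le[OF trivial_limit_at_top_linorder])
  show "(ratio y \<longlongrightarrow> slope y) at_top" "(ratio x \<longlongrightarrow> slope x) at_top"
    using assms by (simp_all add: tendsto_ratio_slope)
  show "eventually (\<lambda>h. ratio x h \<le> ratio y h) at_top"
    using eventually_gt_at_top[of 0] by eventually_elim (use assms in \<open>simp add: ratio_mono\<close>)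
qed

lemma tendsto_ratio:
  assumes cont: "continuous_on nonneg_orthant f" and xs: "(xs \<longlongrightarrow> x) F"
    and x: "x \<in> nonneg_orthant" and in_orthant: "eventually (\<lambda>n. xs n \<in> nonneg_orthant) F"
    and h: "0 < h"
  shows "((\<lambda>n. ratio (xs n) h) \<longlongrightarrow> ratio x h) F"
proof -
  have "continuous_on nonneg_orthant (\<lambda>y. f (h *\<^sub>R y))"
    by (rule continuous_on_compose2[OF cont])
      (auto intro!: continuous_intros scaleR_mem_nonneg_orthant simp: h less_imp_le)
  then have "((\<lambda>n. f (h *\<^sub>R xs n)) \<longlongrightarrow> f (h *\<^sub>R x)) F"
    using xs x in_orthant by (rule continuous_on_tendsto_compose)
  moreover obtain r where r: "f (h *\<^sub>R x) = ereal r"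
    using x h f_eq_ereal scaleR_mem_nonneg_orthant[of x h] by fastforce
  ultimately have "((\<lambda>n. real_of_ereal (f (h *\<^sub>R xs n))) \<longlongrightarrow> r) F"
    by (simp add: lim_real_of_ereal)
  then have "((\<lambda>n. real_of_ereal (f (h *\<^sub>R xs n))) \<longlongrightarrow> real_of_ereal (f (h *\<^sub>R x))) F"
    by (simp add: r)
  then show ?thesis
    unfolding ratio_def by (rule tendsto_divide[OF _ tendsto_const]) (use h in simp)
qed

definition radial_limit :: "real ^ 'n \<Rightarrow> ereal" where
  "radial_limit x = (if x \<in> nonneg_orthant then ereal (slope x) else \<infinity>)"

lemma radial_limit_le_f_scaleR_divide:
  assumes h: "0 < h"
  shows "radial_limit x \<le> f (h *\<^sub>R x) / ereal h"
proof (cases "x \<in> nonneg_orthant")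
  case True
  then show ?thesis
    using h by (simp add: radial_limit_def f_scaleR_divide_eq_ratio slope_le_ratio)
next
  case False
  then have "f (h *\<^sub>R x) = \<infinity>"
    using h by (simp add: f_outside scaleR_mem_nonneg_orthant_iff)
  then show ?thesis
    using h by simp
qed

lemma eventually_less_radial_limit:
  assumes xs: "(xs \<longlongrightarrow> x) F" and c: "c < radial_limit x"
  shows "eventually (\<lambda>n. c < radial_limit (xs n)) F"
proof (cases "x \<in> nonneg_orthant")
  case x: True
  then obtain t where t: "0 < t" "t < 1" "c < ereal (t * slope x)"
    using c ereal_less_times_factorE by (auto simp: radial_limit_def)
  show ?thesis
    using eventually_scaled_le[OF xs x t(2)]
  proof eventually_elim
    case (elim n)
    show ?case
    proof (cases "xs n \<in> nonneg_orthant")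
      case True
      have "t * slope x = slope (t *\<^sub>R x)"
        using x t by (simp add: slope_scaleR)
      also have "\<dots> \<le> slope (xs n)"
        using x t elim True by (simp add: slope_mono scaleR_mem_nonneg_orthant)
      finally show ?thesis
        using t(3) True by (simp add: radial_limit_def order_less_le_trans)
    next
      case False
      then show ?thesis
        using t(3) by (cases c) (simp_all add: radial_limit_def)
    qed
  qed
next
  case False
  then have "eventually (\<lambda>n. xs n \<in> - nonneg_orthant) F"
    using xs closed_nonneg_orthant by (intro topological_tendstoD) auto
  then show ?thesis
    using c False by (auto simp: radial_limit_def elim: eventually_mono)
qed

lemma tendsto_f_scaleR_divide_radial_limit:
  assumes x: "x \<in> nonneg_orthant"
  shows "((\<lambda>h. f (h *\<^sub>R x) / ereal h) \<longlongrightarrow> radial_limit x) at_top"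
proof -
  have "((\<lambda>h. ereal (ratio x h)) \<longlongrightarrow> radial_limit x) at_top"
    using x by (simp add: radial_limit_def tendsto_ratio_slope)
  moreover have "eventually (\<lambda>h. ereal (ratio x h) = f (h *\<^sub>R x) / ereal h) at_top"
    using eventually_gt_at_top[of 0] by eventually_elim (simp add: x f_scaleR_divide_eq_ratio)
  ultimately show ?thesis
    by (rule Lim_transform_eventually)
qed

lemma eventually_less_f_scaleR_divide:
  assumes h: "filterlim h at_top F" and xs: "(xs \<longlongrightarrow> x) F" and c: "c < radial_limit x"
  shows "eventually (\<lambda>n. c < f (h n *\<^sub>R xs n) / ereal (h n)) F"
proof -
  have "eventually (\<lambda>n. 0 < h n) F"
    using h by (simp add: filterlim_at_top_dense)
  with eventually_less_radial_limit[OF xs c] show ?thesis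
    by eventually_elim (use radial_limit_le_f_scaleR_divide in \<open>blast intro: order_less_le_trans\<close>)
qed

lemma asymptotic_fun_eq_radial_limit: "asymptotic_fun f = radial_limit"
proof (intro ext antisym)
  fix x
  show "asymptotic_fun f x \<le> radial_limit x"
  proof (cases "x \<in> nonneg_orthant")
    case True
    have "((\<lambda>n. f (real n *\<^sub>R x) / ereal (real n)) \<longlongrightarrow> radial_limit x) sequentially"
      using tendsto_f_scaleR_divide_radial_limit[OF True] filterlim_real_sequentially
      by (rule filterlim_compose)
    moreover have "(\<lambda>n. real n, \<lambda>n. x) \<in> {(h, xs). filterlim h at_top sequentially \<and> xs \<longlonglongrightarrow> x}"
      using filterlim_real_sequentially by auto
    ultimately show ?thesis
      unfolding asymptotic_fun_def by (auto intro!: INF_lower2 simp: lim_imp_Liminf)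
  qed (simp add: radial_limit_def)
  show "radial_limit x \<le> asymptotic_fun f x"
    unfolding asymptotic_fun_def
    by (auto intro!: INF_greatest simp: le_Liminf_iff eventually_less_f_scaleR_divide)
qed

lemma asymptotic_fun_eq_slope: "x \<in> nonneg_orthant \<Longrightarrow> asymptotic_fun f x = ereal (slope x)"
  by (simp add: asymptotic_fun_eq_radial_limit radial_limit_def)

lemma lower_semicontinuous_asymptotic_fun: "lower_semicontinuous (asymptotic_fun f)"
  unfolding lower_semicontinuous_def asymptotic_fun_eq_radial_limit
  by (blast intro: eventually_less_radial_limit[OF filterlim_ident])

lemma positively_homogeneous_asymptotic_fun: "positively_homogeneous (asymptotic_fun f)"
  unfolding positively_homogeneous_def asymptotic_fun_eq_radial_limit radial_limit_def
  by (auto simp: scaleR_mem_nonneg_orthant_iff slope_scaleR)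

lemma asymptotic_fun_mono:
  "x \<in> nonneg_orthant \<Longrightarrow> y \<in> nonneg_orthant \<Longrightarrow> x \<le> y \<Longrightarrow> asymptotic_fun f x \<le> asymptotic_fun f y"
  by (simp add: asymptotic_fun_eq_slope slope_mono)

lemma eventually_ratio_less:
  assumes cont: "continuous_on nonneg_orthant f" and xs: "(xs \<longlongrightarrow> x) F"
    and x: "x \<in> nonneg_orthant" and in_orthant: "eventually (\<lambda>n. xs n \<in> nonneg_orthant) F"
    and r: "slope x < r"
  obtains H where "0 < H" "eventually (\<lambda>n. ratio (xs n) H < r) F"
proof -
  obtain H where "0 < H" "ratio x H < r"
    by (rule slope_less_ratioE[OF x r])
  then show thesis
    using that order_tendstoD(2)[OF tendsto_ratio[OF cont xs x in_orthant]] by blast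
qed

lemma continuous_on_asymptotic_fun:
  assumes cont: "continuous_on nonneg_orthant f"
  shows "continuous_on nonneg_orthant (asymptotic_fun f)"
  unfolding continuous_on_def
proof
  fix x :: "real ^ 'n"
  assume x: "x \<in> nonneg_orthant"
  define F where "F = at x within nonneg_orthant"
  have in_orthant: "eventually (\<lambda>y. y \<in> nonneg_orthant) F"
    by (simp add: F_def eventually_at_filter)
  have "(asymptotic_fun f \<longlongrightarrow> asymptotic_fun f x) F"
  proof (rule order_tendstoI)
    fix c
    assume "c < asymptotic_fun f x"
    then show "eventually (\<lambda>y. c < asymptotic_fun f y) F"
      unfolding asymptotic_fun_eq_radial_limit F_def by (rule eventually_less_radial_limit[OF tendsto_ident_at])
  next
    fix c
    assume "asymptotic_fun f x < c"
    then obtain r where r: "slope x < r" "ereal r < c"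
      using ereal_dense2 x by (force simp: asymptotic_fun_eq_slope)
    obtain H where H: "0 < H" "eventually (\<lambda>y. ratio y H < r) F"
      using eventually_ratio_less[OF cont _ x in_orthant r(1)] by (auto simp: F_def)
    show "eventually (\<lambda>y. asymptotic_fun f y < c) F"
      using H(2) in_orthant
    proof eventually_elim
      case (elim y)
      then have "ereal (slope y) < ereal r"
        using slope_le_ratio[OF elim(2) H(1)] by simp
      then have "ereal (slope y) < c"
        using r(2) by (rule order.strict_trans)
      then show ?case
        using elim(2) by (simp add: asymptotic_fun_eq_slope)
    qed
  qed
  then show "(asymptotic_fun f \<longlongrightarrow> asymptotic_fun f x) (at x within nonneg_orthant)"
    by (simp add: F_def)
qed

lemma tendsto_asymptotic_fun_sequentially:
  assumes cont: "continuous_on nonneg_orthant f" and x: "x \<in> nonneg_orthant"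
    and xs_in: "\<forall>n. xs n \<in> nonneg_orthant" and h_pos: "\<forall>n. 0 < h n"
    and xs: "xs \<longlonglongrightarrow> x" and h: "filterlim h at_top sequentially"
  shows "((\<lambda>n. f (h n *\<^sub>R xs n) / ereal (h n)) \<longlongrightarrow> asymptotic_fun f x) sequentially"
proof (rule order_tendstoI)
  fix c
  assume "c < asymptotic_fun f x"
  then show "eventually (\<lambda>n. c < f (h n *\<^sub>R xs n) / ereal (h n)) sequentially"
    unfolding asymptotic_fun_eq_radial_limit by (rule eventually_less_f_scaleR_divide[OF h xs])
next
  fix c
  assume "asymptotic_fun f x < c"
  then obtain r where r: "slope x < r" "ereal r < c"
    using ereal_dense2 x by (force simp: asymptotic_fun_eq_slope)
  obtain H where H: "0 < H" "eventually (\<lambda>n. ratio (xs n) H < r) sequentially"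
    using eventually_ratio_less[OF cont xs x _ r(1)] xs_in by auto
  have "eventually (\<lambda>n. H \<le> h n) sequentially"
    using h by (simp add: filterlim_at_top)
  with H(2) show "eventually (\<lambda>n. f (h n *\<^sub>R xs n) / ereal (h n) < c) sequentially"
  proof eventually_elim
    case (elim n)
    then have "ereal (ratio (xs n) (h n)) < ereal r"
      using order_le_less_trans[OF ratio_antimono[OF xs_in[rule_format, of n] H(1) elim(2)] elim(1)]
      by simp
    then have "ereal (ratio (xs n) (h n)) < c"
      using r(2) by (rule order.strict_trans)
    then show ?case
      using xs_in h_pos by (simp add: f_scaleR_divide_eq_ratio)
  qed
qed

lemma concave_on_asymptotic_fun:
  assumes concave: "concave_on nonneg_orthant (\<lambda>x. real_of_ereal (f x))"
  shows "concave_on nonneg_orthant (\<lambda>x. real_of_ereal (asymptotic_fun f x))"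
  unfolding concave_on_iff
proof (intro conjI convex_nonneg_orthant ballI allI impI)
  fix x y :: "real ^ 'n" and u v :: real
  assume x: "x \<in> nonneg_orthant" and y: "y \<in> nonneg_orthant"
    and uv: "0 \<le> u" "0 \<le> v" "u + v = 1"
  define z where "z = u *\<^sub>R x + v *\<^sub>R y"
  have z: "z \<in> nonneg_orthant"
    using convex_nonneg_orthant x y uv unfolding convex_def z_def by blast
  have "u * slope x + v * slope y \<le> slope z"
  proof (rule tendsto_le[OF trivial_limit_at_top_linorder])
    show "(ratio z \<longlongrightarrow> slope z) at_top"
      using z by (rule tendsto_ratio_slope)
    show "((\<lambda>h. u * ratio x h + v * ratio y h) \<longlongrightarrow> u * slope x + v * slope y) at_top"
      using x y by (intro tendsto_intros tendsto_ratio_slope)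
    show "eventually (\<lambda>h. u * ratio x h + v * ratio y h \<le> ratio z h) at_top"
      using eventually_gt_at_top[of 0]
    proof eventually_elim
      case (elim h)
      have "h *\<^sub>R z = u *\<^sub>R (h *\<^sub>R x) + v *\<^sub>R (h *\<^sub>R y)"
        by (simp add: z_def scaleR_add_right mult.commute)
      moreover have "h *\<^sub>R x \<in> nonneg_orthant" "h *\<^sub>R y \<in> nonneg_orthant"
        using x y elim by (simp_all add: scaleR_mem_nonneg_orthant)
      ultimately have "u * real_of_ereal (f (h *\<^sub>R x)) + v * real_of_ereal (f (h *\<^sub>R y))
          \<le> real_of_ereal (f (h *\<^sub>R z))"
        using concave uv unfolding concave_on_iff by presburger
      then show ?case
        using elim unfolding ratio_def by (simp add: divide_right_mono flip: add_divide_distrib)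
    qed
  qed
  then show "u * real_of_ereal (asymptotic_fun f x) + v * real_of_ereal (asymptotic_fun f y)
      \<le> real_of_ereal (asymptotic_fun f (u *\<^sub>R x + v *\<^sub>R y))"
    using x y z by (simp add: asymptotic_fun_eq_slope z_def)
qed

end

theorem proposition1:
  fixes f :: "real ^ 'n \<Rightarrow> ereal"
  assumes sif: "standard_interference f"
  shows
   "(\<forall>x \<in> nonneg_orthant.
        ((\<lambda>h::real. f (h *\<^sub>R x) / ereal h) \<longlongrightarrow> asymptotic_fun f x) at_top \<and>
        0 \<le> asymptotic_fun f x \<and> asymptotic_fun f x < \<infinity>)
    \<and> lower_semicontinuous (asymptotic_fun f)
    \<and> positively_homogeneous (asymptotic_fun f)
    \<and> (continuous_on nonneg_orthant f \<longrightarrow> continuous_on nonneg_orthant (asymptotic_fun f))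
    \<and> (\<forall>x1 \<in> nonneg_orthant. \<forall>x2 \<in> nonneg_orthant.
          x1 \<ge> x2 \<longrightarrow> asymptotic_fun f x2 \<le> asymptotic_fun f x1)
    \<and> (continuous_on nonneg_orthant f \<longrightarrow>
          (\<forall>x \<in> nonneg_orthant. \<forall>xs h.
             (\<forall>n. xs n \<in> nonneg_orthant) \<longrightarrow> (\<forall>n. 0 < h n) \<longrightarrow>
             xs \<longlonglongrightarrow> x \<longrightarrow> filterlim h at_top sequentially \<longrightarrow>
             ((\<lambda>n. f (h n *\<^sub>R xs n) / ereal (h n)) \<longlongrightarrow> asymptotic_fun f x) sequentially))
    \<and> (concave_on nonneg_orthant (\<lambda>x. real_of_ereal (f x)) \<longrightarrow>
          concave_on nonneg_orthant (\<lambda>x. real_of_ereal (asymptotic_fun f x)))"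
proof -
  interpret interference f
    using sif by unfold_locales
  have "\<forall>x \<in> nonneg_orthant.
        ((\<lambda>h::real. f (h *\<^sub>R x) / ereal h) \<longlongrightarrow> asymptotic_fun f x) at_top \<and>
        0 \<le> asymptotic_fun f x \<and> asymptotic_fun f x < \<infinity>"
    by (simp add: asymptotic_fun_eq_radial_limit tendsto_f_scaleR_divide_radial_limit)
      (simp add: radial_limit_def slope_nonneg)
  then show ?thesis
    using lower_semicontinuous_asymptotic_fun positively_homogeneous_asymptotic_fun
      continuous_on_asymptotic_fun asymptotic_fun_mono tendsto_asymptotic_fun_sequentially
      concave_on_asymptotic_fun
    by blast
qed

end
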